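(* Consider the asynchronous network Newton method described in the context with $n\ge2$ and stepsize $0<\varepsilon<\min\{1,2(\lambda/\Lambda)^2\}$, and let $\beta=\frac{\alpha m\varepsilon(2\lambda^2-\varepsilon\Lambda^2)}{n\lambda}\in(0,1)$. Then for all $t\ge1$, $$\mathbb{E}\Big[\big\|D(t-1)^{1/2}(x(t)-x^* )\big\|\Big]\le\left(\frac{2\,(2(1-\delta)+\alpha M)\,(1-\beta)^t}{\alpha m}\big(F(x(0))-F^*\big)\right)^{1/2};$$ in particular this sequence converges to $0$ linearly (in expectation).
   Context: Setup. Let $n\ge 1$ be the number of agents and $\alpha>0$ a scalar. $W\in\mathbb{R}^{n\times n}$ is a symmetric nonnegative matrix with $W\mathbb{1}=\mathbb{1}$ (where $\mathbb{1}$ is the all-ones vector), $\mathrm{null}(I-W)=\mathrm{span}\{\mathbb{1}\}$, $0\le W_{ij}<1$ for all $i,j$, and $\delta\le W_{ii}\le\Delta$ for all $i$, for constants $0<\delta\le\Delta<1$. Each $f_i:\mathbb{R}\to\mathbb{R}$ is twice continuously differentiable with $0<m\le f_i''(s)\le M<\infty$ for all $s$ and $|f_i''(a)-f_i''(b)|\le L|a-b|$ for all $a,b$. Define $F(x)=\frac12 x^T(I-W)x+\alpha\sum_{i=1}^n f_i(x_i)$ for $x\in\mathbb{R}^n$, with minimum value $F^*$ and minimizer $x^*$. Let $g(x)=\nabla F(x)$, $G(x)=\mathrm{diag}(f_1''(x_1),\dots,f_n''(x_n))$, $H(x)=\nabla^2F(x)=I-W+\alpha G(x)$. Let $W_d$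 be the diagonal matrix with $[W_d]_{ii}=W_{ii}$, and set $D(x)=\alpha G(x)+2(I-W_d)$ (diagonal, positive definite) and $B=I-2W_d+W$, so $H(x)=D(x)-B$. Define the approximate Hessian inverse $\hat H(x)^{-1}=D(x)^{-1/2}\big(I+D(x)^{-1/2}BD(x)^{-1/2}\big)D(x)^{-1/2}$. Constants: $\rho=\frac{2(1-\delta)}{2(1-\delta)+\alpha m}$, $\Lambda=\frac{1+\rho}{2(1-\Delta)+\alpha m}$, $\lambda=\frac{1}{2(1-\delta)+\alpha M}$. Algorithm (asynchronous network Newton). Given $x(0)\in\mathbb{R}^n$ and stepsize $\varepsilon>0$, let $\Phi(1),\Phi(2),\dots$ be i.i.d. random diagonal $n\times n$ matrices, each equal to $e_ie_i^T$ (the matrix with a single $1$ in position $(i,i)$ and zeros elsewhere) with probability $1/n$ for each $i=1,\dots,n$ (i.e., one uniformly random agent is active per iteration). The iterates are $x(t)=x(t-1)-\varepsilon\,\Phi(t)\hat H(x(t-1))^{-1}g(x(t-1))$, $t\ge1$. Write $g(t)=g(x(t))$, $D(t)=D(x(t))$, $H(t)=H(x(t))$, $\hat H(t)^{-1}=\hat H(x(t))^{-1}$. $\mathcal{F}_t$ denotes the $\sigma$-field generated by $\Phi(1),\dots,\Phi(t)$ (so $x(t)$ is $\mathcal{F}_t$-measurable). *)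

theory Defs
  imports "HOL-Analysis.Analysis"
begin

definition diag_mat :: "('n::finite \<Rightarrow> real) \<Rightarrow> real^'n^'n" where
  "diag_mat d = (\<chi> i j. if i = j then d i else 0)"

definition objF :: "real^'n^'n \<Rightarrow> real \<Rightarrow> ('n::finite \<Rightarrow> real \<Rightarrow> real) \<Rightarrow> real^'n \<Rightarrow> real" where
  "objF W \<alpha> f x = (1/2) * (x \<bullet> ((mat 1 - W) *v x)) + \<alpha> * (\<Sum>i\<in>UNIV. f i (x $ i))"

text \<open>Gradient g(x) = (I-W)x + alpha (f_i'(x_i))_i, with f1 i the derivative of f i.\<close>
definition gradF :: "real^'n^'n \<Rightarrow> real \<Rightarrow> ('n::finite \<Rightarrow> real \<Rightarrow> real) \<Rightarrow> real^'n \<Rightarrow> real^'n" where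
  "gradF W \<alpha> f1 x = (mat 1 - W) *v x + \<alpha> *\<^sub>R (\<chi> i. f1 i (x $ i))"

text \<open>Diagonal entries of D(x) = alpha G(x) + 2 (I - W_d), with f2 i the second derivative of f i.\<close>
definition Ddiag :: "real^'n^'n \<Rightarrow> real \<Rightarrow> ('n::finite \<Rightarrow> real \<Rightarrow> real) \<Rightarrow> real^'n \<Rightarrow> 'n \<Rightarrow> real" where
  "Ddiag W \<alpha> f2 x i = \<alpha> * f2 i (x $ i) + 2 * (1 - W $ i $ i)"

definition Dmat :: "real^'n^'n \<Rightarrow> real \<Rightarrow> ('n::finite \<Rightarrow> real \<Rightarrow> real) \<Rightarrow> real^'n \<Rightarrow> real^'n^'n" where
  "Dmat W \<alpha> f2 x = diag_mat (Ddiag W \<alpha> f2 x)"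

definition Bmat :: "real^'n^'n \<Rightarrow> real^'n^'n" where
  "Bmat W = mat 1 - 2 *\<^sub>R diag_mat (\<lambda>i. W $ i $ i) + (W :: real^'n::finite^'n)"

definition Hhat_inv :: "real^'n^'n \<Rightarrow> real \<Rightarrow> ('n::finite \<Rightarrow> real \<Rightarrow> real) \<Rightarrow> real^'n \<Rightarrow> real^'n^'n" where
  "Hhat_inv W \<alpha> f2 x =
     (let Dm = diag_mat (\<lambda>i. 1 / sqrt (Ddiag W \<alpha> f2 x i))
      in Dm ** (mat 1 + Dm ** Bmat W ** Dm) ** Dm)"

text \<open>One iteration with active agent i, i.e. Phi = e_i e_i^T:
  x' = x - eps * Phi * Hhat_inv(x) * g(x).\<close>
definition ann_step :: "real^'n^'n \<Rightarrow> real \<Rightarrow> ('n::finite \<Rightarrow> real \<Rightarrow> real) \<Rightarrow> ('n \<Rightarrow> real \<Rightarrow> real)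
     \<Rightarrow> real \<Rightarrow> real^'n \<Rightarrow> 'n \<Rightarrow> real^'n" where
  "ann_step W \<alpha> f1 f2 \<epsilon> x i =
     x - \<epsilon> *\<^sub>R (diag_mat (\<lambda>j. if j = i then 1 else 0) *v (Hhat_inv W \<alpha> f2 x *v gradF W \<alpha> f1 x))"

text \<open>Iterate along a realized sequence of active agents [i_1, ..., i_t]: gives x(t).\<close>
definition ann_iter :: "real^'n^'n \<Rightarrow> real \<Rightarrow> ('n::finite \<Rightarrow> real \<Rightarrow> real) \<Rightarrow> ('n \<Rightarrow> real \<Rightarrow> real)
     \<Rightarrow> real \<Rightarrow> real^'n \<Rightarrow> 'n list \<Rightarrow> real^'n" where
  "ann_iter W \<alpha> f1 f2 \<epsilon> x0 xs = foldl (ann_step W \<alpha> f1 f2 \<epsilon>) x0 xs"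

text \<open>Expectation of a function of (Phi(1),...,Phi(t)) when each Phi(k) independently
  selects a uniformly random agent: average over all length-t agent sequences.\<close>
definition expect_paths :: "nat \<Rightarrow> ('n::finite list \<Rightarrow> real) \<Rightarrow> real" where
  "expect_paths t h = (\<Sum>xs\<in>{xs :: 'n list. length xs = t}. h xs) / real (CARD('n)) ^ t"

definition rho_c :: "real \<Rightarrow> real \<Rightarrow> real \<Rightarrow> real" where
  "rho_c \<alpha> \<delta> m = 2 * (1 - \<delta>) / (2 * (1 - \<delta>) + \<alpha> * m)"
definition Lam_c :: "real \<Rightarrow> real \<Rightarrow> real \<Rightarrow> real \<Rightarrow> real" where
  "Lam_c \<alpha> \<delta> \<Delta> m = (1 + rho_c \<alpha> \<delta> m) / (2 * (1 - \<Delta>) + \<alpha> * m)"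
definition lam_c :: "real \<Rightarrow> real \<Rightarrow> real \<Rightarrow> real" where
  "lam_c \<alpha> \<delta> M = 1 / (2 * (1 - \<delta>) + \<alpha> * M)"
definition beta_c :: "nat \<Rightarrow> real \<Rightarrow> real \<Rightarrow> real \<Rightarrow> real \<Rightarrow> real \<Rightarrow> real \<Rightarrow> real" where
  "beta_c n \<alpha> \<delta> \<Delta> m M \<epsilon> =
     \<alpha> * m * \<epsilon> * (2 * (lam_c \<alpha> \<delta> M)\<^sup>2 - \<epsilon> * (Lam_c \<alpha> \<delta> \<Delta> m)\<^sup>2) / (real n * lam_c \<alpha> \<delta> M)"

end

theory Submission
  imports Defs
begin

text \<open>The objective F is (alpha m)-strongly convex, and along each coordinate its curvature is at
  most 2(1 - delta) + alpha M. The approximate inverse Hessian is uniformly positive and bounded: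
  v . Hhat(x)^-1 v >= lambda |v|^2, because B is positive semidefinite, and
  |Hhat(x)^-1 v| <= Lambda |v|, by Cauchy-Schwarz with the row and column sums 2(1 - W_ii) of B.
  A step of a uniformly random agent therefore decreases F in expectation by at least
  eps (lambda - eps Lambda^2 / (2 lambda)) |g|^2 / n, and the Polyak-Lojasiewicz inequality
  |g|^2 >= 2 alpha m (F - F*) turns this into the contraction factor 1 - beta of F - F*.
  Quadratic growth F - F* >= alpha m |x - x*|^2 / 2 together with D <= 2(1 - delta) + alpha M bounds
  the squared weighted error, and Jensen's inequality moves the expectation inside the square root.\<close>

lemma taylor2_remainder_bounds:
  fixes f f' f'' :: "real \<Rightarrow> real"
  assumes f': "\<And>s. (f has_real_derivative f' s) (at s)"
    and f'': "\<And>s. (f' has_real_derivative f'' s) (at s)"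
    and bounds: "\<And>s. m \<le> f'' s \<and> f'' s \<le> M"
  shows "m * z\<^sup>2 / 2 \<le> f (x + z) - f x - f' x * z \<and> f (x + z) - f x - f' x * z \<le> M * z\<^sup>2 / 2"
proof (cases "z = 0")
  case False
  define diff where "diff = (\<lambda>k::nat. if k = 0 then f else if k = 1 then f' else f'')"
  have "\<exists>t. (if x + z < x then x + z < t \<and> t < x else x < t \<and> t < x + z) \<and>
    f (x + z) = (\<Sum>k<2. diff k x / fact k * (x + z - x) ^ k) + diff 2 t / fact 2 * (x + z - x)\<^sup>2"
    by (rule Taylor[where a = "min x (x + z)" and b = "max x (x + z)"])
      (use False f' f'' in \<open>auto simp: diff_def less_2_cases_iff\<close>)
  then obtain t where "f (x + z) = f x + f' x * z + f'' t / 2 * z\<^sup>2"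
    by (auto simp: diff_def numeral_2_eq_2)
  moreover have "m * z\<^sup>2 \<le> f'' t * z\<^sup>2" "f'' t * z\<^sup>2 \<le> M * z\<^sup>2"
    using bounds by (auto intro: mult_right_mono)
  ultimately show ?thesis by auto
qed simp

lemma weighted_Cauchy_Schwarz_sum:
  fixes a b :: "'a \<Rightarrow> real"
  assumes "\<And>j. j \<in> S \<Longrightarrow> 0 \<le> a j"
  shows "(\<Sum>j\<in>S. a j * b j)\<^sup>2 \<le> (\<Sum>j\<in>S. a j) * (\<Sum>j\<in>S. a j * (b j)\<^sup>2)"
proof -
  have "(\<Sum>j\<in>S. a j * b j) = (\<Sum>j\<in>S. sqrt (a j) * (sqrt (a j) * b j))"
    using assms by (intro sum.cong) (auto simp flip: mult.assoc)
  also have "(\<dots>)\<^sup>2 \<le> (\<Sum>j\<in>S. (sqrt (a j))\<^sup>2) * (\<Sum>j\<in>S. (sqrt (a j) * b j)\<^sup>2)"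
    by (rule Cauchy_Schwarz_ineq_sum)
  also have "\<dots> = (\<Sum>j\<in>S. a j) * (\<Sum>j\<in>S. a j * (b j)\<^sup>2)"
    using assms by (simp add: power_mult_distrib)
  finally show ?thesis .
qed

lemma norm_vec_power2: "(norm (x :: real^'n))\<^sup>2 = (\<Sum>i\<in>UNIV. (x $ i)\<^sup>2)"
  unfolding power2_norm_eq_inner inner_vec_def by (simp add: power2_eq_square)

lemma diag_mat_mult_vec: "diag_mat d *v v = (\<chi> i. d i * v $ i)"
proof -
  have "(\<Sum>j\<in>UNIV. (if i = j then d i else 0) * v $ j) = (\<Sum>j\<in>UNIV. if i = j then d i * v $ i else 0)" for i
    by (intro sum.cong) auto
  then show ?thesis by (simp add: diag_mat_def matrix_vector_mult_def vec_eq_iff)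
qed

lemma card_lists_length: "card {xs :: 'n::finite list. length xs = t} = CARD('n) ^ t"
  using card_lists_length_eq[of "UNIV :: 'n set" t] by simp

lemma expect_paths_Nil: "expect_paths 0 (h :: 'n::finite list \<Rightarrow> real) = h []"
proof -
  have "{xs :: 'n list. length xs = 0} = {[]}" by auto
  then show ?thesis by (simp add: expect_paths_def)
qed

lemma expect_paths_Suc:
  "expect_paths (Suc t) (h :: 'n::finite list \<Rightarrow> real)
     = expect_paths t (\<lambda>xs. (\<Sum>i\<in>UNIV. h (xs @ [i])) / CARD('n))"
proof -
  let ?snoc = "\<lambda>p. fst p @ [snd p]"
  have "{xs :: 'n list. length xs = Suc t} = ?snoc ` ({xs. length xs = t} \<times> UNIV)"
  proof (intro equalityI subsetI)
    fix xs :: "'n list" assume "xs \<in> {xs. length xs = Suc t}"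
    then have "xs = ?snoc (butlast xs, last xs)" "length (butlast xs) = t"
      by (auto intro: append_butlast_last_id[symmetric])
    then show "xs \<in> ?snoc ` ({xs. length xs = t} \<times> UNIV)" by blast
  qed auto
  moreover have "inj_on ?snoc ({xs :: 'n list. length xs = t} \<times> UNIV)"
    by (auto simp: inj_on_def)
  ultimately have "(\<Sum>xs | length xs = Suc t. h xs)
      = (\<Sum>xs | length xs = t. \<Sum>i\<in>UNIV. h (xs @ [i]))"
    by (simp add: sum.reindex sum.cartesian_product split_beta)
  then show ?thesis
    by (simp add: expect_paths_def sum_divide_distrib[symmetric] divide_divide_eq_left mult.commute)
qed

lemma expect_paths_mono:
  "(\<And>xs. h xs \<le> h' xs) \<Longrightarrow> expect_paths t (h :: 'n::finite list \<Rightarrow> real) \<le> expect_paths t h'"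
  unfolding expect_paths_def by (intro divide_right_mono sum_mono) auto

lemma expect_paths_cmult:
  "expect_paths t (\<lambda>xs. c * (h :: 'n::finite list \<Rightarrow> real) xs) = c * expect_paths t h"
  unfolding expect_paths_def by (simp add: sum_distrib_left)

lemma expect_paths_le_sqrt_square:
  "expect_paths t (h :: 'n::finite list \<Rightarrow> real) \<le> sqrt (expect_paths t (\<lambda>xs. (h xs)\<^sup>2))"
proof (rule real_le_rsqrt)
  define S where "S = {xs :: 'n list. length xs = t}"
  define N where "N = real CARD('n) ^ t"
  have N_pos: "N > 0" by (simp add: N_def)
  have "(expect_paths t h)\<^sup>2 = (\<Sum>xs\<in>S. h xs)\<^sup>2 / N\<^sup>2"
    by (simp add: expect_paths_def S_def N_def power_divide)
  also have "\<dots> \<le> (\<Sum>xs\<in>S. (h xs)\<^sup>2) * N / N\<^sup>2"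
    using sum_squared_le_sum_of_squares[of h S]
    by (intro divide_right_mono) (simp_all add: S_def N_def card_lists_length)
  also have "\<dots> = expect_paths t (\<lambda>xs. (h xs)\<^sup>2)"
    using N_pos by (simp add: expect_paths_def S_def N_def[symmetric] power2_eq_square)
  finally show "(expect_paths t h)\<^sup>2 \<le> expect_paths t (\<lambda>xs. (h xs)\<^sup>2)" .
qed

lemma expect_paths_geometric_decay:
  fixes \<phi> :: "'n::finite list \<Rightarrow> real"
  assumes step: "\<And>xs. (\<Sum>i\<in>UNIV. \<phi> (xs @ [i])) / CARD('n) \<le> r * \<phi> xs" and "0 \<le> r"
  shows "expect_paths t \<phi> \<le> r ^ t * \<phi> []"
proof (induction t)
  case (Suc t)
  have "expect_paths (Suc t) \<phi> \<le> expect_paths t (\<lambda>xs. r * \<phi> xs)"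
    unfolding expect_paths_Suc by (intro expect_paths_mono step)
  also have "\<dots> \<le> r * (r ^ t * \<phi> [])"
    unfolding expect_paths_cmult using Suc.IH \<open>0 \<le> r\<close> by (rule mult_left_mono)
  finally show ?case by simp
qed (simp add: expect_paths_Nil)

locale consensus_objective =
  fixes W :: "real^'n::finite^'n" and \<alpha> m M :: real
    and f f1 f2 :: "'n \<Rightarrow> real \<Rightarrow> real"
  assumes alpha_pos: "\<alpha> > 0"
    and W_sym: "transpose W = W"
    and W_nonneg: "\<forall>i j. 0 \<le> W $ i $ j"
    and W_lt1: "\<forall>i j. W $ i $ j < 1"
    and W_stoch: "W *v (1 :: real^'n) = 1"
    and f_deriv: "\<forall>i s. (f i has_real_derivative f1 i s) (at s)"
    and f1_deriv: "\<forall>i s. (f1 i has_real_derivative f2 i s) (at s)"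
    and m_pos: "0 < m"
    and f2_bounds: "\<forall>i s. m \<le> f2 i s \<and> f2 i s \<le> M"
begin

abbreviation F :: "real^'n \<Rightarrow> real" where "F \<equiv> objF W \<alpha> f"
abbreviation grad :: "real^'n \<Rightarrow> real^'n" where "grad \<equiv> gradF W \<alpha> f1"

definition Lap :: "real^'n^'n" where "Lap = mat 1 - W"

lemma m_le_M: "m \<le> M"
  using f2_bounds order_trans by blast

lemma alpha_M_pos: "\<alpha> * M > 0"
  using alpha_pos m_pos m_le_M by simp

lemma W_entry_sym: "W $ i $ j = W $ j $ i"
  by (metis W_sym transpose_def vec_lambda_beta)

lemma W_row_sum: "(\<Sum>j\<in>UNIV. W $ i $ j) = 1"
proof -
  have "(W *v 1) $ i = (1::real)" using W_stoch by simp
  then show ?thesis by (simp add: matrix_vector_mult_def)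
qed

lemma W_col_sum: "(\<Sum>i\<in>UNIV. W $ i $ j) = 1"
  using W_row_sum[of j] by (simp add: W_entry_sym)

lemma sum_W_weighted_square: "(\<Sum>i\<in>UNIV. \<Sum>j\<in>UNIV. W $ i $ j * (u i + c * u j)\<^sup>2)
    = (1 + c\<^sup>2) * (\<Sum>i\<in>UNIV. (u i)\<^sup>2) + 2 * c * (\<Sum>i\<in>UNIV. \<Sum>j\<in>UNIV. W $ i $ j * u i * u j)"
proof -
  have "(\<Sum>i\<in>UNIV. \<Sum>j\<in>UNIV. W $ i $ j * (u i + c * u j)\<^sup>2)
      = (\<Sum>i\<in>UNIV. \<Sum>j\<in>UNIV. W $ i $ j * (u i)\<^sup>2) + c\<^sup>2 * (\<Sum>i\<in>UNIV. \<Sum>j\<in>UNIV. W $ i $ j * (u j)\<^sup>2)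
        + 2 * c * (\<Sum>i\<in>UNIV. \<Sum>j\<in>UNIV. W $ i $ j * u i * u j)"
    by (simp add: sum.distrib sum_distrib_left power2_eq_square algebra_simps)
  also have "(\<Sum>i\<in>UNIV. \<Sum>j\<in>UNIV. W $ i $ j * (u i)\<^sup>2) = (\<Sum>i\<in>UNIV. (u i)\<^sup>2)"
    by (simp add: sum_distrib_right[symmetric] W_row_sum)
  also have "(\<Sum>i\<in>UNIV. \<Sum>j\<in>UNIV. W $ i $ j * (u j)\<^sup>2) = (\<Sum>j\<in>UNIV. (u j)\<^sup>2)"
    by (subst sum.swap) (simp add: sum_distrib_right[symmetric] W_col_sum)
  finally show ?thesis by (simp add: algebra_simps)
qed

lemma Lap_mult_vec_nth: "(Lap *v x) $ i = x $ i - (\<Sum>j\<in>UNIV. W $ i $ j * x $ j)"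
  unfolding Lap_def matrix_vector_mult_diff_rdistrib matrix_vector_mul_lid
  by (simp add: matrix_vector_mult_def)

lemma Lap_inner_commute: "x \<bullet> (Lap *v z) = z \<bullet> (Lap *v x)"
proof -
  have "transpose Lap = Lap"
    by (simp add: Lap_def transpose_def vec_eq_iff mat_def W_entry_sym)
  then show ?thesis
    by (metis dot_lmul_matrix inner_commute vector_transpose_matrix)
qed

lemma Lap_quadratic_form:
  "z \<bullet> (Lap *v z) = (\<Sum>i\<in>UNIV. (z $ i)\<^sup>2) - (\<Sum>i\<in>UNIV. \<Sum>j\<in>UNIV. W $ i $ j * z $ i * z $ j)"
  by (simp add: inner_vec_def Lap_mult_vec_nth right_diff_distrib sum_subtractf sum_distrib_left
      power2_eq_square algebra_simps)

text \<open>The Laplacian form is half the weighted sum of squared differences.\<close>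
lemma Lap_psd: "0 \<le> z \<bullet> (Lap *v z)"
proof -
  have "0 \<le> (\<Sum>i\<in>UNIV. \<Sum>j\<in>UNIV. W $ i $ j * (z $ i + (-1) * z $ j)\<^sup>2)"
    using W_nonneg by (intro sum_nonneg mult_nonneg_nonneg) auto
  then show ?thesis
    unfolding sum_W_weighted_square Lap_quadratic_form by simp
qed

definition taylor_remainder :: "real^'n \<Rightarrow> real^'n \<Rightarrow> 'n \<Rightarrow> real" where
  "taylor_remainder x z i = f i (x $ i + z $ i) - f i (x $ i) - f1 i (x $ i) * z $ i"

lemma taylor_remainder_bounds:
  "m * (z $ i)\<^sup>2 / 2 \<le> taylor_remainder x z i \<and> taylor_remainder x z i \<le> M * (z $ i)\<^sup>2 / 2"
  unfolding taylor_remainder_def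
  by (rule taylor2_remainder_bounds) (use f_deriv f1_deriv f2_bounds in blast)+

lemma objF_add:
  "F (x + z) = F x + grad x \<bullet> z + z \<bullet> (Lap *v z) / 2 + \<alpha> * (\<Sum>i\<in>UNIV. taylor_remainder x z i)"
proof -
  have "(x + z) \<bullet> (Lap *v (x + z)) = x \<bullet> (Lap *v x) + 2 * (z \<bullet> (Lap *v x)) + z \<bullet> (Lap *v z)"
    using Lap_inner_commute[of x z]
    by (simp add: matrix_vector_right_distrib inner_add_left inner_add_right)
  moreover have "grad x \<bullet> z = z \<bullet> (Lap *v x) + \<alpha> * (\<Sum>i\<in>UNIV. f1 i (x $ i) * z $ i)"
    by (simp add: gradF_def Lap_def[symmetric] inner_add_left inner_commute[of _ z] inner_vec_def
        sum_distrib_left sum.distrib distrib_left mult.commute mult.left_commute)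
  ultimately show ?thesis
    unfolding objF_def Lap_def[symmetric] taylor_remainder_def
    by (simp add: sum_subtractf sum.distrib algebra_simps)
qed

lemma objF_strongly_convex: "F x + grad x \<bullet> z + \<alpha> * m / 2 * (z \<bullet> z) \<le> F (x + z)"
proof -
  have "m / 2 * (z \<bullet> z) = (\<Sum>i\<in>UNIV. m * (z $ i)\<^sup>2 / 2)"
    by (simp add: inner_vec_def sum_distrib_left power2_eq_square)
  also have "\<dots> \<le> (\<Sum>i\<in>UNIV. taylor_remainder x z i)"
    using taylor_remainder_bounds by (intro sum_mono) blast
  finally have "\<alpha> * m / 2 * (z \<bullet> z) \<le> \<alpha> * (\<Sum>i\<in>UNIV. taylor_remainder x z i)"
    using alpha_pos mult_left_mono by fastforce
  then show ?thesis using objF_add[of x z] Lap_psd[of z] by linarith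
qed

lemma objF_axis_le:
  "F (x + axis i c) \<le> F x + c * grad x $ i + c\<^sup>2 / 2 * (1 - W $ i $ i + \<alpha> * M)"
proof -
  have Lap_axis: "axis i c \<bullet> (Lap *v axis i c) = c\<^sup>2 * (1 - W $ i $ i)"
  proof -
    have row: "(\<Sum>j\<in>UNIV. W $ k $ j * axis i c $ k * axis i c $ j)
        = (if k = i then W $ i $ i * c\<^sup>2 else 0)" for k
      by (cases "k = i") (simp_all add: axis_def power2_eq_square if_distrib cong: if_cong)
    have sq: "(axis i c $ k)\<^sup>2 = (if k = i then c\<^sup>2 else 0)" for k
      by (simp add: axis_def)
    show ?thesis
      unfolding Lap_quadratic_form row sq by (simp add: algebra_simps)
  qed
  have "taylor_remainder x (axis i c) k \<le> (if k = i then M * c\<^sup>2 / 2 else 0)" for k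
    using taylor_remainder_bounds[where x = x and z = "axis i c" and i = k]
    by (cases "k = i") (simp_all add: taylor_remainder_def axis_def)
  then have "(\<Sum>k\<in>UNIV. taylor_remainder x (axis i c) k) \<le> (\<Sum>k\<in>UNIV. if k = i then M * c\<^sup>2 / 2 else 0)"
    by (intro sum_mono)
  then have "\<alpha> * (\<Sum>k\<in>UNIV. taylor_remainder x (axis i c) k) \<le> \<alpha> * (M * c\<^sup>2 / 2)"
    using alpha_pos by (simp add: mult_left_mono)
  then show ?thesis
    using objF_add[of x "axis i c"] Lap_axis by (simp add: inner_axis field_simps)
qed

text \<open>Minimising the quadratic upper bound of \<open>objF_axis_le\<close> in \<open>c\<close> shows that each
  partial derivative at a minimiser is zero.\<close>
lemma gradF_minimiser:
  assumes min: "\<forall>x. F xs \<le> F x"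
  shows "grad xs = 0"
proof -
  have "grad xs $ i = 0" for i
  proof -
    define K where "K = 1 - W $ i $ i + \<alpha> * M"
    define gi where "gi = grad xs $ i"
    have K_pos: "K > 0" using alpha_M_pos W_lt1 by (smt (verit) K_def)
    have "0 \<le> c * gi + c\<^sup>2 / 2 * K" for c
      using min objF_axis_le[of xs i c] unfolding K_def gi_def by (smt (verit))
    from this[of "- gi / K"] K_pos have "gi\<^sup>2 \<le> 0"
      by (simp add: power2_eq_square field_simps)
    then show ?thesis unfolding gi_def by simp
  qed
  then show ?thesis by (simp add: vec_eq_iff)
qed

lemma objF_quadratic_growth:
  assumes "\<forall>x. F xs \<le> F x"
  shows "\<alpha> * m / 2 * ((x - xs) \<bullet> (x - xs)) \<le> F x - F xs"
  using objF_strongly_convex[of xs "x - xs"] gradF_minimiser[OF assms] by simp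

text \<open>Polyak-Lojasiewicz inequality: minimise the strong convexity lower bound over \<open>z\<close>.\<close>
lemma objF_gradient_dominated:
  assumes "\<forall>x. F xs \<le> F x"
  shows "2 * \<alpha> * m * (F x - F xs) \<le> grad x \<bullet> grad x"
proof -
  define c where "c = \<alpha> * m"
  define z where "z = xs - x"
  have c_pos: "c > 0" using alpha_pos m_pos by (simp add: c_def)
  have "0 \<le> (grad x + c *\<^sub>R z) \<bullet> (grad x + c *\<^sub>R z)" by simp
  also have "\<dots> = grad x \<bullet> grad x + 2 * c * (grad x \<bullet> z + c / 2 * (z \<bullet> z))"
    by (simp add: inner_add_left inner_add_right inner_commute power2_eq_square algebra_simps)
  also have "\<dots> \<le> grad x \<bullet> grad x + 2 * c * (F xs - F x)"
    using objF_strongly_convex[of x z] c_pos unfolding c_def z_def by (simp add: mult_left_mono)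
  finally show ?thesis unfolding c_def by (simp add: algebra_simps)
qed

end

locale network_newton = consensus_objective W \<alpha> m M f f1 f2
  for W :: "real^'n::finite^'n" and \<alpha> m M :: real and f f1 f2 :: "'n \<Rightarrow> real \<Rightarrow> real" +
  fixes \<delta> \<Delta> :: real
  assumes delta_pos: "0 < \<delta>" and delta_Delta: "\<delta> \<le> \<Delta>" and Delta_lt1: "\<Delta> < 1"
    and W_diag: "\<forall>i. \<delta> \<le> W $ i $ i \<and> W $ i $ i \<le> \<Delta>"
begin

abbreviation D where "D \<equiv> Ddiag W \<alpha> f2"
abbreviation Hinv where "Hinv \<equiv> Hhat_inv W \<alpha> f2"
abbreviation Dmin :: real where "Dmin \<equiv> 2 * (1 - \<Delta>) + \<alpha> * m"
abbreviation Dmax :: real where "Dmax \<equiv> 2 * (1 - \<delta>) + \<alpha> * M"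
abbreviation rho :: real where "rho \<equiv> rho_c \<alpha> \<delta> m"
abbreviation lam :: real where "lam \<equiv> lam_c \<alpha> \<delta> M"
abbreviation Lam :: real where "Lam \<equiv> Lam_c \<alpha> \<delta> \<Delta> m"

lemma Bmat_entry: "Bmat W $ i $ j = W $ i $ j + (if i = j then 1 - 2 * W $ i $ i else 0)"
  by (simp add: Bmat_def diag_mat_def mat_def)

lemma Bmat_nonneg: "0 \<le> Bmat W $ i $ j"
proof -
  have "W $ i $ i < 1" using W_lt1 by blast
  then show ?thesis using W_nonneg by (cases "i = j") (auto simp: Bmat_entry)
qed

lemma Bmat_row_sum: "(\<Sum>j\<in>UNIV. Bmat W $ i $ j) = 2 * (1 - W $ i $ i)"
  by (simp add: Bmat_entry sum.distrib W_row_sum)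

lemma Bmat_col_sum: "(\<Sum>i\<in>UNIV. Bmat W $ i $ j) = 2 * (1 - W $ j $ j)"
  by (simp add: Bmat_entry sum.distrib W_col_sum)

lemma Bmat_quadratic_form: "(\<Sum>i\<in>UNIV. u i * (\<Sum>j\<in>UNIV. Bmat W $ i $ j * u j))
    = (\<Sum>i\<in>UNIV. \<Sum>j\<in>UNIV. W $ i $ j * u i * u j) + (\<Sum>i\<in>UNIV. (1 - 2 * W $ i $ i) * (u i)\<^sup>2)"
proof -
  have row: "(\<Sum>j\<in>UNIV. Bmat W $ i $ j * u j) = (\<Sum>j\<in>UNIV. W $ i $ j * u j) + (1 - 2 * W $ i $ i) * u i" for i
  proof -
    have "(\<Sum>j\<in>UNIV. Bmat W $ i $ j * u j)
        = (\<Sum>j\<in>UNIV. W $ i $ j * u j + (if i = j then (1 - 2 * W $ i $ i) * u i else 0))"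
      by (rule sum.cong) (auto simp: Bmat_entry distrib_right)
    then show ?thesis by (simp add: sum.distrib)
  qed
  have "(\<Sum>i\<in>UNIV. u i * ((\<Sum>j\<in>UNIV. W $ i $ j * u j) + (1 - 2 * W $ i $ i) * u i))
      = (\<Sum>i\<in>UNIV. (\<Sum>j\<in>UNIV. W $ i $ j * u i * u j) + (1 - 2 * W $ i $ i) * (u i)\<^sup>2)"
    by (rule sum.cong) (simp_all add: distrib_left sum_distrib_left power2_eq_square mult_ac)
  then show ?thesis unfolding row by (simp add: sum.distrib)
qed

text \<open>Positive semidefiniteness of \<open>B\<close>: the diagonal terms of
  \<open>\<Sum>i j. W i j (u i + u j)\<^sup>2 \<ge> 0\<close> alone already give \<open>4 \<Sum>i. W i i (u i)\<^sup>2\<close>.\<close>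
lemma Bmat_psd: "0 \<le> (\<Sum>i\<in>UNIV. u i * (\<Sum>j\<in>UNIV. Bmat W $ i $ j * u j))"
proof -
  have "4 * (\<Sum>i\<in>UNIV. W $ i $ i * (u i)\<^sup>2) = (\<Sum>i\<in>UNIV. W $ i $ i * (u i + 1 * u i)\<^sup>2)"
    by (simp add: sum_distrib_left power2_eq_square algebra_simps)
  also have "\<dots> \<le> (\<Sum>i\<in>UNIV. \<Sum>j\<in>UNIV. W $ i $ j * (u i + 1 * u j)\<^sup>2)"
    by (intro sum_mono member_le_sum) (use W_nonneg in auto)
  also have "\<dots> = 2 * (\<Sum>i\<in>UNIV. (u i)\<^sup>2) + 2 * (\<Sum>i\<in>UNIV. \<Sum>j\<in>UNIV. W $ i $ j * u i * u j)"
    using sum_W_weighted_square[of u 1] by simp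
  finally have "4 * (\<Sum>i\<in>UNIV. W $ i $ i * (u i)\<^sup>2)
      \<le> 2 * (\<Sum>i\<in>UNIV. (u i)\<^sup>2) + 2 * (\<Sum>i\<in>UNIV. \<Sum>j\<in>UNIV. W $ i $ j * u i * u j)" .
  moreover have "(\<Sum>i\<in>UNIV. (1 - 2 * W $ i $ i) * (u i)\<^sup>2)
      = (\<Sum>i\<in>UNIV. (u i)\<^sup>2) - 2 * (\<Sum>i\<in>UNIV. W $ i $ i * (u i)\<^sup>2)"
    by (simp add: left_diff_distrib sum_subtractf sum_distrib_left mult.assoc)
  ultimately show ?thesis
    unfolding Bmat_quadratic_form by linarith
qed

lemma Ddiag_ge: "2 * (1 - W $ i $ i) + \<alpha> * m \<le> D x i"
  using f2_bounds alpha_pos by (simp add: Ddiag_def mult_left_mono)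

lemma Ddiag_ge_Dmin: "Dmin \<le> D x i"
proof -
  have "W $ i $ i \<le> \<Delta>" using W_diag by blast
  then show ?thesis using Ddiag_ge[of i x] by (smt (verit))
qed

lemma Ddiag_le_Dmax: "D x i \<le> Dmax"
proof -
  have "\<delta> \<le> W $ i $ i" using W_diag by blast
  moreover have "\<alpha> * f2 i (x $ i) \<le> \<alpha> * M" using f2_bounds alpha_pos by (simp add: mult_left_mono)
  ultimately show ?thesis by (simp add: Ddiag_def)
qed

lemma Dmin_pos: "0 < Dmin"
  using alpha_pos m_pos Delta_lt1 by (simp add: add_pos_pos)

lemma Ddiag_pos: "0 < D x i"
  using Dmin_pos Ddiag_ge_Dmin by (rule less_le_trans)

lemma Dmax_pos: "0 < Dmax"
  using Ddiag_pos Ddiag_le_Dmax by (rule less_le_trans)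

lemma rho_nonneg: "0 \<le> rho"
  using alpha_pos m_pos delta_Delta Delta_lt1 by (simp add: rho_c_def)

lemma lam_eq: "lam = 1 / Dmax"
  by (simp add: lam_c_def)

lemma Lam_eq: "Lam = (1 + rho) / Dmin"
  by (simp add: Lam_c_def)

lemma lam_pos: "0 < lam"
  using Dmax_pos by (simp add: lam_eq)

lemma Lam_pos: "0 < Lam"
  using rho_nonneg Dmin_pos by (simp add: Lam_eq)

lemma Hhat_inv_mult_vec_nth: "(Hinv x *v v) $ i
    = v $ i / D x i + (\<Sum>j\<in>UNIV. Bmat W $ i $ j * (v $ j / D x j)) / D x i"
proof -
  define Dm where "Dm = diag_mat (\<lambda>i. 1 / sqrt (D x i))"
  have half_twice: "1 / sqrt (D x k) * (1 / sqrt (D x k) * a) = a / D x k" for k a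
  proof -
    have "sqrt (D x k) * sqrt (D x k) = D x k" using Ddiag_pos[of x k] by simp
    moreover have "1 / sqrt (D x k) * (1 / sqrt (D x k) * a) = a / (sqrt (D x k) * sqrt (D x k))"
      by simp
    ultimately show ?thesis by simp
  qed
  have Hinv_Dm: "Hinv x *v v = Dm *v (Dm *v v + Dm *v (Bmat W *v (Dm *v (Dm *v v))))"
    unfolding Hhat_inv_def Let_def Dm_def[symmetric]
    by (simp only: matrix_vector_mul_assoc[symmetric] matrix_vector_mult_add_rdistrib matrix_vector_mul_lid)
  have Dm_twice: "Dm *v (Dm *v w) = (\<chi> k. w $ k / D x k)" for w
    by (simp add: Dm_def diag_mat_mult_vec vec_eq_iff half_twice abs_of_pos[OF Ddiag_pos])
  show ?thesis
    unfolding Hinv_Dm matrix_vector_right_distrib Dm_twice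
    by (simp add: Dm_def diag_mat_mult_vec matrix_vector_mult_def half_twice add_divide_distrib
        abs_of_pos[OF Ddiag_pos])
qed

lemma Bmat_row_sum_div_Ddiag_le: "2 * (1 - W $ i $ i) / D x i \<le> rho"
proof -
  define a b c where "a = 2 * (1 - W $ i $ i)" and "b = 2 * (1 - \<delta>)" and "c = \<alpha> * m"
  have c_pos: "c > 0" by (simp add: c_def alpha_pos m_pos)
  have a_nonneg: "0 \<le> a" using W_lt1 by (simp add: a_def less_imp_le)
  have "a \<le> b" using W_diag by (simp add: a_def b_def)
  have "a / D x i \<le> a / (a + c)"
    using Ddiag_ge[of i x] a_nonneg c_pos unfolding a_def c_def by (intro divide_left_mono) auto
  also have "\<dots> \<le> b / (b + c)"
    using \<open>a \<le> b\<close> a_nonneg c_pos by (simp add: divide_simps mult_right_mono algebra_simps)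
  finally show ?thesis by (simp add: a_def b_def c_def rho_c_def)
qed

lemma Bmat_row_sum_div_Ddiag_sq_le: "2 * (1 - W $ i $ i) / (D x i)\<^sup>2 \<le> rho / Dmin"
proof -
  have "2 * (1 - W $ i $ i) / (D x i)\<^sup>2 = 2 * (1 - W $ i $ i) / D x i * (1 / D x i)"
    by (simp add: power2_eq_square)
  also have "\<dots> \<le> rho * (1 / Dmin)"
    using Bmat_row_sum_div_Ddiag_le Ddiag_pos Ddiag_ge_Dmin Dmin_pos rho_nonneg W_lt1
    by (intro mult_mono divide_left_mono) (auto simp: less_imp_le)
  finally show ?thesis by simp
qed

lemma inner_Hhat_inv_ge: "lam * (v \<bullet> v) \<le> v \<bullet> (Hinv x *v v)"
proof -
  define u where "u i = v $ i / D x i" for i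
  have "v \<bullet> (Hinv x *v v) = (\<Sum>i\<in>UNIV. (v $ i)\<^sup>2 / D x i + u i * (\<Sum>j\<in>UNIV. Bmat W $ i $ j * u j))"
    unfolding inner_vec_def
    by (rule sum.cong) (simp_all add: Hhat_inv_mult_vec_nth u_def power2_eq_square distrib_left)
  also have "\<dots> = (\<Sum>i\<in>UNIV. (v $ i)\<^sup>2 / D x i) + (\<Sum>i\<in>UNIV. u i * (\<Sum>j\<in>UNIV. Bmat W $ i $ j * u j))"
    by (simp add: sum.distrib)
  moreover have "lam * (v \<bullet> v) \<le> (\<Sum>i\<in>UNIV. (v $ i)\<^sup>2 / D x i)"
  proof -
    have "lam * (v \<bullet> v) = (\<Sum>i\<in>UNIV. (v $ i)\<^sup>2 / Dmax)"
      by (simp add: lam_eq inner_vec_def sum_divide_distrib power2_eq_square)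
    also have "\<dots> \<le> (\<Sum>i\<in>UNIV. (v $ i)\<^sup>2 / D x i)"
      by (intro sum_mono divide_left_mono[OF Ddiag_le_Dmax zero_le_power2 mult_pos_pos[OF Dmax_pos Ddiag_pos]])
    finally show ?thesis .
  qed
  ultimately show ?thesis using Bmat_psd[of u] by linarith
qed

lemma norm_div_Ddiag_le: "norm (\<chi> i. v $ i / D x i) \<le> norm v / Dmin"
proof (rule power2_le_imp_le)
  have "(norm (\<chi> i. v $ i / D x i))\<^sup>2 = (\<Sum>i\<in>UNIV. (v $ i)\<^sup>2 / (D x i)\<^sup>2)"
    by (simp add: norm_vec_power2 power_divide)
  also have "\<dots> \<le> (\<Sum>i\<in>UNIV. (v $ i)\<^sup>2 / Dmin\<^sup>2)"
  proof (rule sum_mono)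
    fix i
    have "Dmin\<^sup>2 \<le> (D x i)\<^sup>2"
      using Ddiag_ge_Dmin Dmin_pos by (intro power_mono) (auto simp: less_imp_le)
    then show "(v $ i)\<^sup>2 / (D x i)\<^sup>2 \<le> (v $ i)\<^sup>2 / Dmin\<^sup>2"
      using Dmin_pos Ddiag_pos[of x i] by (intro divide_left_mono) auto
  qed
  also have "\<dots> = (norm v / Dmin)\<^sup>2"
    by (simp only: power_divide norm_vec_power2 sum_divide_distrib)
  finally show "(norm (\<chi> i. v $ i / D x i))\<^sup>2 \<le> (norm v / Dmin)\<^sup>2" .
qed (use Dmin_pos in simp)

text \<open>Cauchy--Schwarz with the row weights of \<open>B\<close>, then the column sums of \<open>B\<close>.\<close>
lemma norm_Bmat_part_le:
  "norm (\<chi> i. (\<Sum>j\<in>UNIV. Bmat W $ i $ j * (v $ j / D x j)) / D x i) \<le> rho / Dmin * norm v"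
proof (rule power2_le_imp_le)
  define u where "u j = v $ j / D x j" for j
  have row: "((\<Sum>j\<in>UNIV. Bmat W $ i $ j * u j) / D x i)\<^sup>2
      \<le> rho / Dmin * (\<Sum>j\<in>UNIV. Bmat W $ i $ j * (u j)\<^sup>2)" for i
  proof -
    have "((\<Sum>j\<in>UNIV. Bmat W $ i $ j * u j) / D x i)\<^sup>2
        \<le> 2 * (1 - W $ i $ i) * (\<Sum>j\<in>UNIV. Bmat W $ i $ j * (u j)\<^sup>2) / (D x i)\<^sup>2"
      unfolding power_divide
      using weighted_Cauchy_Schwarz_sum[of UNIV "\<lambda>j. Bmat W $ i $ j" u] Bmat_nonneg
      by (intro divide_right_mono) (auto simp: Bmat_row_sum)
    also have "\<dots> \<le> rho / Dmin * (\<Sum>j\<in>UNIV. Bmat W $ i $ j * (u j)\<^sup>2)"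
      using Bmat_row_sum_div_Ddiag_sq_le[of i x] Bmat_nonneg
      by (simp add: mult_right_mono sum_nonneg flip: times_divide_eq_left)
    finally show ?thesis .
  qed
  have col: "2 * (1 - W $ j $ j) * (u j)\<^sup>2 \<le> rho / Dmin * (v $ j)\<^sup>2" for j
  proof -
    have "2 * (1 - W $ j $ j) * (u j)\<^sup>2 = 2 * (1 - W $ j $ j) / (D x j)\<^sup>2 * (v $ j)\<^sup>2"
      by (simp add: u_def power_divide)
    also have "\<dots> \<le> rho / Dmin * (v $ j)\<^sup>2"
      by (rule mult_right_mono[OF Bmat_row_sum_div_Ddiag_sq_le zero_le_power2])
    finally show ?thesis .
  qed
  have "(norm (\<chi> i. (\<Sum>j\<in>UNIV. Bmat W $ i $ j * u j) / D x i))\<^sup>2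
      \<le> (\<Sum>i\<in>UNIV. rho / Dmin * (\<Sum>j\<in>UNIV. Bmat W $ i $ j * (u j)\<^sup>2))"
    unfolding norm_vec_power2 vec_lambda_beta by (intro sum_mono row)
  also have "\<dots> = rho / Dmin * (\<Sum>j\<in>UNIV. 2 * (1 - W $ j $ j) * (u j)\<^sup>2)"
  proof -
    have "(\<Sum>i\<in>UNIV. \<Sum>j\<in>UNIV. Bmat W $ i $ j * (u j)\<^sup>2) = (\<Sum>j\<in>UNIV. (\<Sum>i\<in>UNIV. Bmat W $ i $ j) * (u j)\<^sup>2)"
      by (subst sum.swap) (simp add: sum_distrib_right)
    then show ?thesis by (simp only: sum_distrib_left[symmetric] Bmat_col_sum)
  qed
  also have "\<dots> \<le> rho / Dmin * (\<Sum>j\<in>UNIV. rho / Dmin * (v $ j)\<^sup>2)"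
    using rho_nonneg Dmin_pos by (intro mult_left_mono sum_mono col) auto
  also have "\<dots> = (rho / Dmin * norm v)\<^sup>2"
    by (simp only: power_mult_distrib norm_vec_power2 sum_distrib_left) (simp add: power2_eq_square mult.assoc)
  finally show "(norm (\<chi> i. (\<Sum>j\<in>UNIV. Bmat W $ i $ j * (v $ j / D x j)) / D x i))\<^sup>2
      \<le> (rho / Dmin * norm v)\<^sup>2" by (simp only: u_def)
qed (use rho_nonneg Dmin_pos in simp)

lemma norm_Hhat_inv_le: "norm (Hinv x *v v) \<le> Lam * norm v"
proof -
  have "Hinv x *v v = (\<chi> i. v $ i / D x i) + (\<chi> i. (\<Sum>j\<in>UNIV. Bmat W $ i $ j * (v $ j / D x j)) / D x i)"
    by (simp add: vec_eq_iff Hhat_inv_mult_vec_nth)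
  then have "norm (Hinv x *v v)
      \<le> norm (\<chi> i. v $ i / D x i) + norm (\<chi> i. (\<Sum>j\<in>UNIV. Bmat W $ i $ j * (v $ j / D x j)) / D x i)"
    by (simp only: norm_triangle_ineq)
  also have "\<dots> \<le> norm v / Dmin + rho / Dmin * norm v"
    by (intro add_mono norm_div_Ddiag_le norm_Bmat_part_le)
  also have "\<dots> = Lam * norm v"
    by (simp add: Lam_eq add_divide_distrib algebra_simps)
  finally show ?thesis .
qed

lemma ann_step_eq_axis:
  "ann_step W \<alpha> f1 f2 \<epsilon> x i = x + axis i (- (\<epsilon> * (Hinv x *v grad x) $ i))"
  by (simp add: ann_step_def diag_mat_mult_vec vec_eq_iff axis_def)

lemma objF_ann_step_le:
  "F (ann_step W \<alpha> f1 f2 \<epsilon> x i)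
     \<le> F x - \<epsilon> * (grad x $ i * (Hinv x *v grad x) $ i) + \<epsilon>\<^sup>2 / 2 * Dmax * ((Hinv x *v grad x) $ i)\<^sup>2"
proof -
  define h where "h = (Hinv x *v grad x) $ i"
  have "1 - W $ i $ i + \<alpha> * M \<le> Dmax"
    using W_diag Delta_lt1 delta_Delta by (smt (verit))
  then have "(\<epsilon> * h)\<^sup>2 / 2 * (1 - W $ i $ i + \<alpha> * M) \<le> (\<epsilon> * h)\<^sup>2 / 2 * Dmax"
    by (intro mult_left_mono) auto
  then show ?thesis
    using objF_axis_le[of x i "- (\<epsilon> * h)"]
    unfolding ann_step_eq_axis h_def[symmetric] by (simp add: power_mult_distrib mult_ac)
qed

text \<open>Averaging \<open>objF_ann_step_le\<close> over the active agent turns the coordinate terms into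
  inner products, which the two bounds on \<open>Hinv\<close> control.\<close>
lemma sum_objF_ann_step_le:
  assumes "0 \<le> \<epsilon>"
  shows "(\<Sum>i\<in>UNIV. F (ann_step W \<alpha> f1 f2 \<epsilon> x i))
     \<le> CARD('n) * F x - \<epsilon> * (lam - \<epsilon> * Lam\<^sup>2 / (2 * lam)) * (grad x \<bullet> grad x)"
proof -
  define g h where "g = grad x" and "h = Hinv x *v grad x"
  have "(\<Sum>i\<in>UNIV. F (ann_step W \<alpha> f1 f2 \<epsilon> x i))
      \<le> (\<Sum>i\<in>UNIV. F x - \<epsilon> * (g $ i * h $ i) + \<epsilon>\<^sup>2 / 2 * Dmax * (h $ i)\<^sup>2)"
    unfolding g_def h_def by (intro sum_mono objF_ann_step_le)
  also have "\<dots> = CARD('n) * F x - \<epsilon> * (g \<bullet> h) + \<epsilon>\<^sup>2 / 2 * Dmax * (h \<bullet> h)"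
    by (simp add: sum.distrib sum_subtractf sum_distrib_left inner_vec_def power2_eq_square)
  also have "\<dots> \<le> CARD('n) * F x - \<epsilon> * (lam * (g \<bullet> g)) + \<epsilon>\<^sup>2 / 2 * Dmax * (Lam\<^sup>2 * (g \<bullet> g))"
  proof -
    have "\<epsilon> * (lam * (g \<bullet> g)) \<le> \<epsilon> * (g \<bullet> h)"
      using inner_Hhat_inv_ge assms unfolding g_def h_def by (intro mult_left_mono) auto
    moreover have "h \<bullet> h \<le> Lam\<^sup>2 * (g \<bullet> g)"
      using norm_Hhat_inv_le[of x g] Lam_pos
      unfolding h_def g_def dot_square_norm power_mult_distrib[symmetric] by (intro power_mono) auto
    then have "\<epsilon>\<^sup>2 / 2 * Dmax * (h \<bullet> h) \<le> \<epsilon>\<^sup>2 / 2 * Dmax * (Lam\<^sup>2 * (g \<bullet> g))"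
      using Dmax_pos by (intro mult_left_mono) auto
    ultimately show ?thesis by linarith
  qed
  also have "\<dots> = CARD('n) * F x - \<epsilon> * (lam - \<epsilon> * Lam\<^sup>2 / (2 * lam)) * (g \<bullet> g)"
    using lam_pos by (simp add: lam_eq field_simps power2_eq_square)
  finally show ?thesis unfolding g_def .
qed

lemma beta_c_eq:
  "beta_c CARD('n) \<alpha> \<delta> \<Delta> m M \<epsilon> = 2 * \<alpha> * m * (\<epsilon> * (lam - \<epsilon> * Lam\<^sup>2 / (2 * lam))) / CARD('n)"
proof -
  have "real CARD('n) > 0" by simp
  then show ?thesis using lam_pos by (simp add: beta_c_def field_simps power2_eq_square)
qed

lemma step_size_bound_iff: "\<epsilon> < 2 * (lam / Lam)\<^sup>2 \<longleftrightarrow> \<epsilon> * Lam\<^sup>2 < 2 * lam\<^sup>2"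
  using Lam_pos by (simp add: power_divide field_simps)

lemma beta_c_bounds:
  assumes "CARD('n) \<ge> 2" and "0 < \<epsilon>" and "\<epsilon> < min 1 (2 * (lam / Lam)\<^sup>2)"
  shows "0 < beta_c CARD('n) \<alpha> \<delta> \<Delta> m M \<epsilon> \<and> beta_c CARD('n) \<alpha> \<delta> \<Delta> m M \<epsilon> < 1"
proof -
  define c where "c = \<epsilon> * (lam - \<epsilon> * Lam\<^sup>2 / (2 * lam))"
  have "\<epsilon> * Lam\<^sup>2 < 2 * lam\<^sup>2" using assms(3) step_size_bound_iff by simp
  then have "\<epsilon> * Lam\<^sup>2 / (2 * lam) < lam"
    using lam_pos by (simp add: divide_less_eq power2_eq_square)
  then have c_pos: "0 < c" using assms(2) by (simp add: c_def)
  have "c \<le> \<epsilon> * lam"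
    using assms(2) lam_pos Lam_pos by (simp add: c_def mult_left_mono)
  also have "\<dots> < lam" using assms(3) lam_pos by simp
  finally have "\<alpha> * m * c < \<alpha> * m * lam"
    using alpha_pos m_pos by simp
  also have "\<alpha> * m * lam \<le> 1"
    using alpha_pos m_le_M delta_Delta Delta_lt1 Dmax_pos
    by (simp add: lam_eq mult_left_mono add_increasing)
  finally have "\<alpha> * m * c < 1" .
  moreover have "2 * \<alpha> * m * c / CARD('n) \<le> \<alpha> * m * c"
    using assms(1) c_pos alpha_pos m_pos by (simp add: divide_le_eq mult_left_mono)
  moreover have "0 < 2 * \<alpha> * m * c / CARD('n)"
    using c_pos alpha_pos m_pos by (simp add: zero_less_card_finite)
  ultimately show ?thesis unfolding beta_c_eq c_def[symmetric] by linarith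
qed

lemma ann_step_expected_contraction:
  assumes min: "\<forall>x. F xs \<le> F x" and "0 \<le> \<epsilon>" and "\<epsilon> * Lam\<^sup>2 \<le> 2 * lam\<^sup>2"
  shows "(\<Sum>i\<in>UNIV. F (ann_step W \<alpha> f1 f2 \<epsilon> x i) - F xs) / CARD('n)
      \<le> (1 - beta_c CARD('n) \<alpha> \<delta> \<Delta> m M \<epsilon>) * (F x - F xs)"
proof -
  define n c where "n = real CARD('n)" and "c = \<epsilon> * (lam - \<epsilon> * Lam\<^sup>2 / (2 * lam))"
  have "\<epsilon> * Lam\<^sup>2 / (2 * lam) \<le> lam"
    using assms(3) lam_pos by (simp add: divide_le_eq power2_eq_square)
  then have c_nonneg: "0 \<le> c" using assms(2) by (simp add: c_def)
  have "(\<Sum>i\<in>UNIV. F (ann_step W \<alpha> f1 f2 \<epsilon> x i) - F xs)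
      = (\<Sum>i\<in>UNIV. F (ann_step W \<alpha> f1 f2 \<epsilon> x i)) - n * F xs"
    by (simp add: sum_subtractf n_def)
  also have "\<dots> \<le> n * F x - c * (grad x \<bullet> grad x) - n * F xs"
    using sum_objF_ann_step_le[OF assms(2), of x] by (simp add: n_def c_def)
  also have "\<dots> \<le> n * (F x - F xs) - c * (2 * \<alpha> * m * (F x - F xs))"
    using mult_left_mono[OF objF_gradient_dominated[OF min, of x] c_nonneg]
    by (simp add: algebra_simps)
  also have "\<dots> = (1 - 2 * \<alpha> * m * c / n) * (F x - F xs) * n"
    by (simp add: n_def field_simps)
  finally show ?thesis
    unfolding beta_c_eq c_def[symmetric] n_def[symmetric] by (simp add: n_def pos_divide_le_eq)
qed

lemma scaled_error_square_le:
  assumes "\<forall>x. F xs \<le> F x"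
  shows "(norm (\<chi> i. sqrt (D y i) * (x $ i - xs $ i)))\<^sup>2 \<le> 2 * Dmax / (\<alpha> * m) * (F x - F xs)"
proof -
  have "(norm (\<chi> i. sqrt (D y i) * (x $ i - xs $ i)))\<^sup>2 = (\<Sum>i\<in>UNIV. D y i * ((x - xs) $ i)\<^sup>2)"
    using Ddiag_pos by (simp add: norm_vec_power2 power_mult_distrib less_imp_le)
  also have "\<dots> \<le> (\<Sum>i\<in>UNIV. Dmax * ((x - xs) $ i)\<^sup>2)"
    by (intro sum_mono mult_right_mono Ddiag_le_Dmax zero_le_power2)
  also have "\<dots> = Dmax * ((x - xs) \<bullet> (x - xs))"
    by (simp add: inner_vec_def sum_distrib_left power2_eq_square)
  also have "\<dots> \<le> Dmax * (2 / (\<alpha> * m) * (F x - F xs))"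
    using objF_quadratic_growth[OF assms, of x] alpha_pos m_pos Dmax_pos
    by (intro mult_left_mono) (auto simp: field_simps)
  also have "\<dots> = 2 * Dmax / (\<alpha> * m) * (F x - F xs)"
    by (simp only: times_divide_eq_left times_divide_eq_right mult_ac)
  finally show ?thesis .
qed

end

theorem mainTheorem8:
  fixes W :: "real^'n::finite^'n"
    and \<alpha> \<delta> \<Delta> m M L \<epsilon> :: real
    and f f1 f2 :: "'n \<Rightarrow> real \<Rightarrow> real"
    and x0 xstar :: "real^'n"
  assumes n2: "CARD('n) \<ge> 2"
    and alpha_pos: "\<alpha> > 0"
    and W_sym: "transpose W = W"
    and W_nonneg: "\<forall>i j. 0 \<le> W $ i $ j"
    and W_lt1: "\<forall>i j. W $ i $ j < 1"
    and W_stoch: "W *v (1 :: real^'n) = 1"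
    and W_null: "{x. (mat 1 - W) *v x = 0} = span {1 :: real^'n}"
    and delta_pos: "0 < \<delta>" and delta_Delta: "\<delta> \<le> \<Delta>" and Delta_lt1: "\<Delta> < 1"
    and W_diag: "\<forall>i. \<delta> \<le> W $ i $ i \<and> W $ i $ i \<le> \<Delta>"
    and f_deriv: "\<forall>i s. (f i has_real_derivative f1 i s) (at s)"
    and f1_deriv: "\<forall>i s. (f1 i has_real_derivative f2 i s) (at s)"
    and f2_cont: "\<forall>i. continuous_on UNIV (f2 i)"
    and m_pos: "0 < m" and M_fin: "m \<le> M"
    and f2_bounds: "\<forall>i s. m \<le> f2 i s \<and> f2 i s \<le> M"
    and f2_lip: "\<forall>i a b. \<bar>f2 i a - f2 i b\<bar> \<le> L * \<bar>a - b\<bar>"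
    and xstar_min: "\<forall>x. objF W \<alpha> f xstar \<le> objF W \<alpha> f x"
    and eps_pos: "0 < \<epsilon>"
    and eps_bound: "\<epsilon> < min 1 (2 * (lam_c \<alpha> \<delta> M / Lam_c \<alpha> \<delta> \<Delta> m) ^ 2)"
  shows
   "0 < beta_c CARD('n) \<alpha> \<delta> \<Delta> m M \<epsilon> \<and> beta_c CARD('n) \<alpha> \<delta> \<Delta> m M \<epsilon> < 1 \<and>
    (\<forall>t::nat. t \<ge> 1 \<longrightarrow>
       expect_paths t (\<lambda>xs.
          norm (\<chi> i. sqrt (Ddiag W \<alpha> f2 (ann_iter W \<alpha> f1 f2 \<epsilon> x0 (butlast xs)) i)
                     * (ann_iter W \<alpha> f1 f2 \<epsilon> x0 xs $ i - xstar $ i)))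
       \<le> sqrt (2 * (2 * (1 - \<delta>) + \<alpha> * M) * (1 - beta_c CARD('n) \<alpha> \<delta> \<Delta> m M \<epsilon>) ^ t / (\<alpha> * m)
                * (objF W \<alpha> f x0 - objF W \<alpha> f xstar)))"
proof -
  interpret network_newton W \<alpha> m M f f1 f2 \<delta> \<Delta>
    using alpha_pos W_sym W_nonneg W_lt1 W_stoch f_deriv f1_deriv m_pos f2_bounds
      delta_pos delta_Delta Delta_lt1 W_diag by unfold_locales
  define \<beta> where "\<beta> = beta_c CARD('n) \<alpha> \<delta> \<Delta> m M \<epsilon>"
  define X where "X = ann_iter W \<alpha> f1 f2 \<epsilon> x0"
  define \<phi> where "\<phi> xs = F (X xs) - F xstar" for xs
  define Y where
    "Y xs = norm (\<chi> i. sqrt (D (X (butlast xs)) i) * (X xs $ i - xstar $ i))" for xs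
  have \<beta>: "0 < \<beta> \<and> \<beta> < 1"
    unfolding \<beta>_def using n2 eps_pos eps_bound by (rule beta_c_bounds)
  have "\<epsilon> * Lam\<^sup>2 \<le> 2 * lam\<^sup>2"
    using eps_bound step_size_bound_iff by simp
  then have decay: "expect_paths t \<phi> \<le> (1 - \<beta>) ^ t * \<phi> []" for t
    using ann_step_expected_contraction[OF xstar_min] eps_pos \<beta>
    by (intro expect_paths_geometric_decay) (simp_all add: \<phi>_def X_def ann_iter_def \<beta>_def)
  have "expect_paths t Y \<le> sqrt (2 * Dmax * (1 - \<beta>) ^ t / (\<alpha> * m) * (F x0 - F xstar))" for t
  proof -
    have "expect_paths t Y \<le> sqrt (expect_paths t (\<lambda>xs. (Y xs)\<^sup>2))"
      by (rule expect_paths_le_sqrt_square)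
    also have "\<dots> \<le> sqrt (2 * Dmax / (\<alpha> * m) * expect_paths t \<phi>)"
      unfolding Y_def \<phi>_def expect_paths_cmult[symmetric]
      by (intro real_sqrt_le_mono expect_paths_mono scaled_error_square_le xstar_min)
    also have "\<dots> \<le> sqrt (2 * Dmax / (\<alpha> * m) * ((1 - \<beta>) ^ t * \<phi> []))"
      using decay alpha_pos m_pos Dmax_pos by (intro real_sqrt_le_mono mult_left_mono) simp_all
    also have "\<phi> [] = F x0 - F xstar"
      by (simp add: \<phi>_def X_def ann_iter_def)
    finally show ?thesis
      by (simp only: times_divide_eq_left times_divide_eq_right mult_ac)
  qed
  then show ?thesis
    using \<beta> unfolding \<beta>_def Y_def X_def by blast
qed

end
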